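(* Let $G$ be a cycle of cliques with cliques $\{C_1,\dots,C_\ell\}$. If there are two cliques $C_i$ and $C_j$ with $C_{i,i}$ and $C_{j,j}$ non-empty, then $Z_+(G)=|V(G)|-\operatorname{cc}(G)$.
   Context: $\operatorname{cc}(G)$ is the minimum number of cliques needed to cover all edges of $G$. A min-max clique covering is a clique covering of size $\operatorname{cc}(G)$ consisting of maximal cliques. $G$ is a cycle of cliques (with cliques $\{C_1,\dots,C_\ell\}$) if $\{C_1,\dots,C_\ell\}$ is a min-max clique covering of $G$ with $C_i\cap C_{i+1}\neq\emptyset$ for $i=1,\dots,\ell-1$ and $C_1\cap C_\ell\neq\emptyset$, while all other pairwise intersections are empty. $C_{i,i}=C_i\setminus\bigcup_{j\ne i}C_j$. $Z_+(G)$ is the positive zero forcing number: the minimum size of a set $B$ of initially black vertices such that repeated application of the rule "let $W_1,\dots,W_k$ be the vertex sets of components of $G$ minus the black vertices; a black vertex $u$ whose only white neighbour in the subgraph induced by $W_i\cup(\text{black vertices})$ is $w$ may turn $w$ black" eventually makes all vertices black. *)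

theory Defs
  imports Main
begin

definition graph :: "'a set \<Rightarrow> ('a \<Rightarrow> 'a \<Rightarrow> bool) \<Rightarrow> bool" where
  "graph V E \<longleftrightarrow> finite V \<and> (\<forall>u v. E u v \<longrightarrow> E v u) \<and> (\<forall>u. \<not> E u u)
     \<and> (\<forall>u v. E u v \<longrightarrow> u \<in> V \<and> v \<in> V)"

definition is_clique :: "'a set \<Rightarrow> ('a \<Rightarrow> 'a \<Rightarrow> bool) \<Rightarrow> 'a set \<Rightarrow> bool" where
  "is_clique V E C \<longleftrightarrow> C \<subseteq> V \<and> (\<forall>x\<in>C. \<forall>y\<in>C. x \<noteq> y \<longrightarrow> E x y)"

definition is_maximal_clique :: "'a set \<Rightarrow> ('a \<Rightarrow> 'a \<Rightarrow> bool) \<Rightarrow> 'a set \<Rightarrow> bool" where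
  "is_maximal_clique V E C \<longleftrightarrow> is_clique V E C \<and> (\<forall>D. is_clique V E D \<and> C \<subseteq> D \<longrightarrow> D = C)"

definition clique_covering :: "'a set \<Rightarrow> ('a \<Rightarrow> 'a \<Rightarrow> bool) \<Rightarrow> 'a set set \<Rightarrow> bool" where
  "clique_covering V E \<C> \<longleftrightarrow> finite \<C> \<and> (\<forall>C\<in>\<C>. is_clique V E C)
     \<and> (\<forall>u v. E u v \<longrightarrow> (\<exists>C\<in>\<C>. u \<in> C \<and> v \<in> C))"

definition cc :: "'a set \<Rightarrow> ('a \<Rightarrow> 'a \<Rightarrow> bool) \<Rightarrow> nat" where
  "cc V E = (LEAST k. \<exists>\<C>. clique_covering V E \<C> \<and> card \<C> = k)"

definition min_max_clique_covering :: "'a set \<Rightarrow> ('a \<Rightarrow> 'a \<Rightarrow> bool) \<Rightarrow> 'a set set \<Rightarrow> bool" where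
  "min_max_clique_covering V E \<C> \<longleftrightarrow> clique_covering V E \<C> \<and> card \<C> = cc V E
     \<and> (\<forall>C\<in>\<C>. is_maximal_clique V E C)"

definition cycle_of_cliques :: "'a set \<Rightarrow> ('a \<Rightarrow> 'a \<Rightarrow> bool) \<Rightarrow> nat \<Rightarrow> (nat \<Rightarrow> 'a set) \<Rightarrow> bool" where
  "cycle_of_cliques V E l C \<longleftrightarrow>
     inj_on C {1..l} \<and> min_max_clique_covering V E (C ` {1..l})
     \<and> (\<forall>i\<in>{1..l}. \<forall>j\<in>{1..l}. i \<noteq> j \<longrightarrow>
          (C i \<inter> C j \<noteq> {} \<longleftrightarrow> (j = i + 1 \<or> i = j + 1 \<or> {i, j} = {1, l})))"

text \<open>C_{i,i} = C_i minus the union of the other cliques.\<close>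
definition private_part :: "nat \<Rightarrow> (nat \<Rightarrow> 'a set) \<Rightarrow> nat \<Rightarrow> 'a set" where
  "private_part l C i = C i - (\<Union>j\<in>{1..l} - {i}. C j)"

definition component_of :: "('a \<Rightarrow> 'a \<Rightarrow> bool) \<Rightarrow> 'a set \<Rightarrow> 'a \<Rightarrow> 'a set" where
  "component_of E X x = {y. (\<lambda>a b. a \<in> X \<and> b \<in> X \<and> E a b)\<^sup>*\<^sup>* x y}"

definition is_component :: "('a \<Rightarrow> 'a \<Rightarrow> bool) \<Rightarrow> 'a set \<Rightarrow> 'a set \<Rightarrow> bool" where
  "is_component E X W \<longleftrightarrow> (\<exists>x\<in>X. W = component_of E X x)"

inductive pzf_reach :: "'a set \<Rightarrow> ('a \<Rightarrow> 'a \<Rightarrow> bool) \<Rightarrow> 'a set \<Rightarrow> 'a set \<Rightarrow> bool"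
  for V E B where
  start: "pzf_reach V E B B"
| force: "\<lbrakk> pzf_reach V E B S; u \<in> S; is_component E (V - S) W; w \<in> W; E u w;
            \<forall>x\<in>W. E u x \<longrightarrow> x = w \<rbrakk> \<Longrightarrow> pzf_reach V E B (insert w S)"

definition pzf_set :: "'a set \<Rightarrow> ('a \<Rightarrow> 'a \<Rightarrow> bool) \<Rightarrow> 'a set \<Rightarrow> bool" where
  "pzf_set V E B \<longleftrightarrow> B \<subseteq> V \<and> pzf_reach V E B V"

definition Z_plus :: "'a set \<Rightarrow> ('a \<Rightarrow> 'a \<Rightarrow> bool) \<Rightarrow> nat" where
  "Z_plus V E = (LEAST k. \<exists>B. pzf_set V E B \<and> card B = k)"

end

theory Submission
  imports Defs
begin

text \<open>In a positive zero forcing process every force u \<rightarrow> w turns black the last white vertex of a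
  clique of the covering containing the edge uw (any other white vertex of that clique would be a
  second white neighbour of u in the component of w). Hence every forcing set leaves at most
  cc(G) vertices white, and Z_+(G) \<ge> |V| - cc(G).

  Conversely, one vertex per clique can be left white and forced afterwards. Rotating the cycle so
  that the cliques with private vertices are C_1 and C_r, the white vertices are the two private
  vertices and, for every other t, a vertex lying exactly in C_t and in its neighbour towards C_r;
  they are forced along the two arcs from C_1 to C_r. Such vertices exist because for l \<noteq> 3 no three
  cliques of the cycle meet pairwise; the triangle l = 3 is handled directly using maximality.\<close>

lemma component_of_subset: "x \<in> X \<Longrightarrow> component_of E X x \<subseteq> X"
proof
  fix y assume x: "x \<in> X" and "y \<in> component_of E X x"
  then have "(\<lambda>a b. a \<in> X \<and> b \<in> X \<and> E a b)\<^sup>*\<^sup>* x y" by (simp add: component_of_def)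
  then show "y \<in> X" using x by (induction rule: rtranclp_induct) auto
qed

lemma component_of_closed:
  "y \<in> component_of E X x \<Longrightarrow> y \<in> X \<Longrightarrow> z \<in> X \<Longrightarrow> E y z \<Longrightarrow> z \<in> component_of E X x"
  unfolding component_of_def by (auto intro: rtranclp.rtrancl_into_rtrancl)

lemma component_of_isolated: "\<forall>z\<in>X. \<not> E w z \<Longrightarrow> component_of E X w = {w}"
  unfolding component_of_def by (auto elim: converse_rtranclpE)

lemma pzf_reach_force:
  assumes reach: "pzf_reach V E B S" and "u \<in> S" "w \<in> V - S" "E u w"
    and unique: "(\<forall>x\<in>V - S. E u x \<longrightarrow> x = w) \<or> (\<forall>x\<in>V - S. \<not> E w x)"
  shows "pzf_reach V E B (insert w S)"
proof -
  define W where "W = component_of E (V - S) w"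
  have "is_component E (V - S) W" using \<open>w \<in> V - S\<close> by (auto simp: is_component_def W_def)
  moreover have "w \<in> W" by (simp add: W_def component_of_def)
  moreover have "\<forall>x\<in>W. E u x \<longrightarrow> x = w"
    using unique
  proof
    assume "\<forall>x\<in>V - S. E u x \<longrightarrow> x = w"
    then show ?thesis using component_of_subset[OF \<open>w \<in> V - S\<close>] by (auto simp: W_def)
  next
    assume "\<forall>x\<in>V - S. \<not> E w x"
    then show ?thesis by (simp add: W_def component_of_isolated)
  qed
  ultimately show ?thesis using pzf_reach.force[OF reach \<open>u \<in> S\<close>] \<open>E u w\<close> by blast
qed

text \<open>In the second alternative w k is an isolated white vertex, hence its own component.\<close>
lemma pzf_reach_ranked_stage:
  fixes w :: "'i \<Rightarrow> 'a" and rk :: "'i \<Rightarrow> nat"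
  assumes "graph V E" "w ` I \<subseteq> V" "inj_on w I" "inj_on rk I"
    and forcer: "\<And>k. k \<in> I \<Longrightarrow> \<exists>u \<in> V - w ` {m\<in>I. rk k \<le> rk m}. E u (w k) \<and>
       ((\<forall>m\<in>I. rk k < rk m \<longrightarrow> \<not> E u (w m)) \<or> (\<forall>m\<in>I. rk k < rk m \<longrightarrow> \<not> E (w k) (w m)))"
  shows "pzf_reach V E (V - w ` I) (V - w ` {m\<in>I. n \<le> rk m})"
proof (induction n)
  case 0
  show ?case by (simp add: pzf_reach.start)
next
  case (Suc n)
  show ?case
  proof (cases "\<exists>k\<in>I. rk k = n")
    case False
    then have "{m\<in>I. Suc n \<le> rk m} = {m\<in>I. n \<le> rk m}" by (auto simp: Suc_le_eq order.order_iff_strict)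
    with Suc show ?thesis by simp
  next
    case True
    then obtain k where k: "k \<in> I" "rk k = n" by blast
    let ?S = "V - w ` {m\<in>I. n \<le> rk m}"
    have later: "{m\<in>I. n \<le> rk m} = insert k {m\<in>I. rk k < rk m}"
      using k \<open>inj_on rk I\<close> by (auto simp: order.order_iff_strict inj_on_def)
    have white: "V - ?S = insert (w k) (w ` {m\<in>I. rk k < rk m})"
      using k \<open>w ` I \<subseteq> V\<close> by (auto simp: later)
    have "w k \<notin> w ` {m\<in>I. rk k < rk m}"
      using k \<open>inj_on w I\<close> by (auto simp: inj_on_def)
    then have next_black: "V - w ` {m\<in>I. Suc n \<le> rk m} = insert (w k) ?S"
      using k \<open>w ` I \<subseteq> V\<close> by (auto simp: later Suc_le_eq)
    obtain u where u: "u \<in> ?S" "E u (w k)"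
      and alt: "(\<forall>m\<in>I. rk k < rk m \<longrightarrow> \<not> E u (w m)) \<or> (\<forall>m\<in>I. rk k < rk m \<longrightarrow> \<not> E (w k) (w m))"
      using forcer[OF k(1)] k(2) by blast
    have "\<not> E (w k) (w k)" using \<open>graph V E\<close> by (simp add: graph_def)
    then have "(\<forall>x\<in>V - ?S. E u x \<longrightarrow> x = w k) \<or> (\<forall>x\<in>V - ?S. \<not> E (w k) x)"
      using alt unfolding white by blast
    moreover have "w k \<in> V - ?S" using white by blast
    ultimately have "pzf_reach V E (V - w ` I) (insert (w k) ?S)"
      using pzf_reach_force[OF Suc.IH u(1)] u(2) by blast
    then show ?thesis by (simp add: next_black)
  qed
qed

lemma pzf_reach_ranked:
  fixes w :: "'i \<Rightarrow> 'a" and rk :: "'i \<Rightarrow> nat"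
  assumes "graph V E" "finite I" "w ` I \<subseteq> V" "inj_on w I" "inj_on rk I"
    and "\<And>k. k \<in> I \<Longrightarrow> \<exists>u \<in> V - w ` {m\<in>I. rk k \<le> rk m}. E u (w k) \<and>
       ((\<forall>m\<in>I. rk k < rk m \<longrightarrow> \<not> E u (w m)) \<or> (\<forall>m\<in>I. rk k < rk m \<longrightarrow> \<not> E (w k) (w m)))"
  shows "pzf_reach V E (V - w ` I) V"
proof -
  have "{m\<in>I. Suc (Max (rk ` I)) \<le> rk m} = {}"
    using \<open>finite I\<close> by (auto simp: Suc_le_eq not_less intro: Max_ge)
  then show ?thesis
    using pzf_reach_ranked_stage[OF assms(1,3-6), of "Suc (Max (rk ` I))"]
    by (metis Diff_empty image_empty)
qed

lemma pzf_reach_completes_cliques: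
  assumes "graph V E" "clique_covering V E \<C>" "pzf_reach V E B S" "B \<subseteq> V"
  shows "\<exists>\<F>\<subseteq>\<C>. card \<F> + card B = card S \<and> (\<forall>K\<in>\<F>. K \<subseteq> S) \<and> S \<subseteq> V \<and> B \<subseteq> S"
  using \<open>pzf_reach V E B S\<close>
proof (induction rule: pzf_reach.induct)
  case start
  then show ?case using \<open>B \<subseteq> V\<close> by (intro exI[of _ "{}"]) auto
next
  case (force S u W w)
  then obtain \<F> where \<F>: "\<F> \<subseteq> \<C>" "card \<F> + card B = card S" "\<forall>K\<in>\<F>. K \<subseteq> S" "S \<subseteq> V" "B \<subseteq> S"
    by blast
  obtain y where y: "y \<in> V - S" "W = component_of E (V - S) y"
    using force.hyps(3) by (auto simp: is_component_def)
  have "w \<in> V - S" using component_of_subset[OF y(1)] y(2) force.hyps(4) by auto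
  obtain K where K: "K \<in> \<C>" "u \<in> K" "w \<in> K" "is_clique V E K"
    using \<open>clique_covering V E \<C>\<close> \<open>E u w\<close> unfolding clique_covering_def by blast
  have "K \<subseteq> insert w S"
  proof
    fix x assume "x \<in> K"
    show "x \<in> insert w S"
    proof (rule ccontr)
      assume x: "x \<notin> insert w S"
      then have "x \<in> V - S" "E w x" "E u x"
        using K \<open>x \<in> K\<close> \<open>u \<in> S\<close> by (auto simp: is_clique_def)
      then have "x \<in> W"
        using component_of_closed[of w E "V - S" y x] force.hyps(4) \<open>w \<in> V - S\<close> y(2) by blast
      then show False using force.hyps(6) \<open>E u x\<close> x by blast
    qed
  qed
  moreover have "finite S" "finite \<F>"
    using \<F>(1,4) \<open>graph V E\<close> \<open>clique_covering V E \<C>\<close>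
    by (auto simp: graph_def clique_covering_def dest: finite_subset)
  moreover have "K \<notin> \<F>" using \<F>(3) K(3) \<open>w \<in> V - S\<close> by blast
  ultimately have "card (insert K \<F>) + card B = card (insert w S)"
    using \<F>(2) \<open>w \<in> V - S\<close> by (simp add: card_insert_disjoint)
  moreover have "\<forall>K'\<in>insert K \<F>. K' \<subseteq> insert w S" using \<open>K \<subseteq> insert w S\<close> \<F>(3) by blast
  moreover have "insert K \<F> \<subseteq> \<C>" "insert w S \<subseteq> V" "B \<subseteq> insert w S"
    using \<F>(1,4,5) K(1) \<open>w \<in> V - S\<close> by blast+
  ultimately show ?case by blast
qed

lemma card_le_clique_covering_plus_pzf_set:
  assumes "graph V E" "clique_covering V E \<C>" "pzf_set V E B"
  shows "card V \<le> card \<C> + card B"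
proof -
  have "B \<subseteq> V" "pzf_reach V E B V" using \<open>pzf_set V E B\<close> by (simp_all add: pzf_set_def)
  then obtain \<F> where "\<F> \<subseteq> \<C>" "card \<F> + card B = card V"
    using pzf_reach_completes_cliques[OF assms(1,2) \<open>pzf_reach V E B V\<close> \<open>B \<subseteq> V\<close>] by auto
  moreover have "finite \<C>" using \<open>clique_covering V E \<C>\<close> by (simp add: clique_covering_def)
  ultimately show ?thesis using card_mono[of \<C> \<F>] by linarith
qed

definition cyclic_adjacent :: "nat \<Rightarrow> nat \<Rightarrow> nat \<Rightarrow> bool" where
  "cyclic_adjacent l a b \<longleftrightarrow> b = a + 1 \<or> a = b + 1 \<or> {a, b} = {1, l}"

lemma cyclic_adjacent_no_triangle:
  assumes "l \<noteq> 3" "a \<in> {1..l}" "b \<in> {1..l}" "c \<in> {1..l}" "a \<noteq> b" "a \<noteq> c" "b \<noteq> c"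
    and "cyclic_adjacent l a b" "cyclic_adjacent l a c" "cyclic_adjacent l b c"
  shows False
  using assms unfolding cyclic_adjacent_def doubleton_eq_iff by auto

lemma obtain_third_index:
  fixes i j :: nat
  assumes "i \<in> {1..3}" "j \<in> {1..3}" "i \<noteq> j"
  obtains m where "m \<in> {1..3}" "m \<noteq> i" "m \<noteq> j" "{1..3} = {i, j, m}"
proof (rule that[of "6 - i - j"])
  show "6 - i - j \<in> {1..3}" "6 - i - j \<noteq> i" "6 - i - j \<noteq> j"
    using assms unfolding atLeastAtMost_iff by arith+
  have "t = i \<or> t = j \<or> t = 6 - i - j" if "t \<in> {1..3}" for t
    using that assms unfolding atLeastAtMost_iff by linarith
  then show "{1..3} = {i, j, 6 - i - j}" using assms \<open>6 - i - j \<in> {1..3}\<close> by blast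
qed

definition cyclic_shift :: "nat \<Rightarrow> nat \<Rightarrow> nat \<Rightarrow> nat" where
  "cyclic_shift l i t = (if t + i - 1 \<le> l then t + i - 1 else t + i - 1 - l)"

context
  fixes l i :: nat
  assumes i: "i \<in> {1..l}"
begin

lemma bij_betw_cyclic_shift: "bij_betw (cyclic_shift l i) {1..l} {1..l}"
proof (rule bij_betw_imageI)
  show "inj_on (cyclic_shift l i) {1..l}"
    using i by (auto simp: inj_on_def cyclic_shift_def split: if_splits)
  have "s \<in> cyclic_shift l i ` {1..l}" if "s \<in> {1..l}" for s
    using i that
    by (intro image_eqI[of _ _ "if i \<le> s then s - i + 1 else s + l - i + 1"])
       (auto simp: cyclic_shift_def)
  moreover have "cyclic_shift l i ` {1..l} \<subseteq> {1..l}"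
    using i by (auto simp: cyclic_shift_def)
  ultimately show "cyclic_shift l i ` {1..l} = {1..l}" by blast
qed

lemma cyclic_shift_1: "cyclic_shift l i 1 = i"
  using i by (simp add: cyclic_shift_def)

lemma cyclic_adjacent_shift:
  "a \<in> {1..l} \<Longrightarrow> b \<in> {1..l} \<Longrightarrow>
    cyclic_adjacent l (cyclic_shift l i a) (cyclic_shift l i b) \<longleftrightarrow> cyclic_adjacent l a b"
  using i unfolding cyclic_adjacent_def doubleton_eq_iff cyclic_shift_def by (auto split: if_splits)

end

text \<open>The forcing scheme for private vertices in C_1 and C_r: the white vertex assigned to clique t
  lies in exactly the cliques witness_indices r t, the vertices are forced in the order
  1, 2, \<dots>, r - 1, l, l - 1, \<dots>, r + 1, r given by forcing_rank, and the forcer of the vertex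
  assigned to k lies in exactly the two consecutive cliques forcer_indices l r k.\<close>
definition witness_indices :: "nat \<Rightarrow> nat \<Rightarrow> nat set" where
  "witness_indices r t =
    (if t = 1 then {1} else if t < r then {t, t + 1} else if t = r then {r} else {t, t - 1})"

definition forcer_indices :: "nat \<Rightarrow> nat \<Rightarrow> nat \<Rightarrow> nat set" where
  "forcer_indices l r k =
    (if k = 1 then {1, 2} else if k \<le> r then {k - 1, k} else if k = l then {l, 1} else {k, k + 1})"

definition forcing_rank :: "nat \<Rightarrow> nat \<Rightarrow> nat \<Rightarrow> nat" where
  "forcing_rank l r k = (if k = 1 then 0 else if k < r then k else if k = r then 2 * l else 2 * l - k)"

lemma witness_indices_self: "t \<in> witness_indices r t"
  by (simp add: witness_indices_def)

lemma forcer_indices_self: "k \<ge> 1 \<Longrightarrow> k \<in> forcer_indices l r k"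
  by (auto simp: forcer_indices_def)

context
  fixes l r :: nat
  assumes r: "2 \<le> r" "r \<le> l"
begin

lemma witness_indices_eq_iff:
  "s \<in> {1..l} \<Longrightarrow> t \<in> {1..l} \<Longrightarrow> witness_indices r s = witness_indices r t \<longleftrightarrow> s = t"
  using r by (auto simp: witness_indices_def doubleton_eq_iff split: if_splits)

lemma witness_indices_pair:
  assumes "t \<in> {1..l}" "t \<noteq> 1" "t \<noteq> r"
  obtains a where "a \<in> {1..l}" "a \<noteq> t" "cyclic_adjacent l t a" "witness_indices r t = {t, a}"
proof (cases "t < r")
  case True
  show ?thesis
    by (rule that[of "t + 1"]) (use True assms r in \<open>auto simp: witness_indices_def cyclic_adjacent_def\<close>)
next
  case False
  show ?thesis
    by (rule that[of "t - 1"]) (use False assms r in \<open>auto simp: witness_indices_def cyclic_adjacent_def\<close>)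
qed

lemma forcer_indices_pair:
  assumes "k \<in> {1..l}"
  obtains a b where "a \<in> {1..l}" "b \<in> {1..l}" "a \<noteq> b" "cyclic_adjacent l a b"
    "forcer_indices l r k = {a, b}"
proof -
  consider "k = 1" | "k \<noteq> 1" "k \<le> r" | "r < k" "k = l" | "r < k" "k \<noteq> l" by linarith
  then show ?thesis
  proof cases
    case 1
    show ?thesis
      by (rule that[of 1 2]) (use 1 r in \<open>auto simp: forcer_indices_def cyclic_adjacent_def\<close>)
  next
    case 2
    show ?thesis
      by (rule that[of "k - 1" k]) (use 2 assms r in \<open>auto simp: forcer_indices_def cyclic_adjacent_def\<close>)
  next
    case 3
    show ?thesis
      by (rule that[of l 1]) (use 3 assms r in \<open>auto simp: forcer_indices_def cyclic_adjacent_def\<close>)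
  next
    case 4
    show ?thesis
      by (rule that[of k "k + 1"]) (use 4 assms r in \<open>auto simp: forcer_indices_def cyclic_adjacent_def\<close>)
  qed
qed

lemma inj_on_forcing_rank: "inj_on (forcing_rank l r) {1..l}"
  using r unfolding inj_on_def forcing_rank_def by (auto split: if_splits)

lemma forcer_indices_not_witness:
  assumes "k \<in> {1..l}" "m \<in> {1..l}" "forcing_rank l r k \<le> forcing_rank l r m"
  shows "forcer_indices l r k \<noteq> witness_indices r m"
proof
  assume eq: "forcer_indices l r k = witness_indices r m"
  have "card (forcer_indices l r k) = 2" using assms(1) r by (auto simp: forcer_indices_def)
  then have "card (witness_indices r m) = 2" using eq by simp
  then have m: "m \<noteq> 1" "m \<noteq> r" by (auto simp: witness_indices_def split: if_splits)
  consider "k = 1" | "k \<noteq> 1" "k \<le> r" | "r < k" "k = l" | "r < k" "k \<noteq> l" by linarith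
  then show False
  proof cases
    case 1
    then show ?thesis using assms eq m r
      by (auto simp: forcer_indices_def witness_indices_def doubleton_eq_iff split: if_splits)
  next
    case 2
    then show ?thesis using assms eq m r
      by (auto simp: forcer_indices_def witness_indices_def forcing_rank_def doubleton_eq_iff split: if_splits)
  next
    case 3
    then show ?thesis using assms eq m r
      by (auto simp: forcer_indices_def witness_indices_def doubleton_eq_iff split: if_splits)
  next
    case 4
    then show ?thesis using assms eq m r
      by (auto simp: forcer_indices_def witness_indices_def forcing_rank_def doubleton_eq_iff split: if_splits)
  qed
qed

lemma forcing_later_disjoint:
  assumes k: "k \<in> {1..l}"
  shows "(\<forall>m\<in>{1..l}. forcing_rank l r k < forcing_rank l r m \<longrightarrow> forcer_indices l r k \<inter> witness_indices r m = {})
    \<or> (\<forall>m\<in>{1..l}. forcing_rank l r k < forcing_rank l r m \<longrightarrow> witness_indices r k \<inter> witness_indices r m = {})"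
proof -
  have "1 \<le> k" using k by simp
  then consider "k = 1" | "1 < k" "k < r" | "k = r" | "r < k" by linarith
  then show ?thesis
  proof cases
    case 1
    then show ?thesis using r by (auto simp: witness_indices_def forcing_rank_def)
  next
    case 2
    then show ?thesis using r by (auto simp: forcer_indices_def witness_indices_def forcing_rank_def)
  next
    case 3
    then show ?thesis using r by (auto simp: forcing_rank_def)
  next
    case 4
    then show ?thesis using r k by (auto simp: forcer_indices_def witness_indices_def forcing_rank_def)
  qed
qed

end

lemma pzf_set_complement:
  assumes "finite V" "W \<subseteq> V" "pzf_reach V E (V - W) V"
  shows "pzf_set V E (V - W) \<and> card (V - W) = card V - card W"
  using assms by (simp add: pzf_set_def card_Diff_subset finite_subset)

lemma private_part_reindex:
  assumes "bij_betw f {1..l} {1..l}" "t \<in> {1..l}"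
  shows "private_part l (D \<circ> f) t = private_part l D (f t)"
proof -
  have "f ` ({1..l} - {t}) = {1..l} - {f t}"
    using assms inj_on_image_set_diff[of f "{1..l}" "{1..l}" "{t}"] by (auto simp: bij_betw_def)
  then have "(\<Union>s\<in>{1..l} - {t}. D (f s)) = (\<Union>s\<in>{1..l} - {f t}. D s)"
    by (metis image_image)
  then show ?thesis by (simp add: private_part_def)
qed

text \<open>The part of cycle_of_cliques used by the forcing constructions; unlike minimality and
  maximality of the covering it is preserved by rotating the indices.\<close>
locale clique_cycle =
  fixes V :: "'a set" and E :: "'a \<Rightarrow> 'a \<Rightarrow> bool" and l :: nat and D :: "nat \<Rightarrow> 'a set"
  assumes graph: "graph V E"
    and clique: "t \<in> {1..l} \<Longrightarrow> is_clique V E (D t)"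
    and covers_edges: "E u v \<Longrightarrow> \<exists>t\<in>{1..l}. u \<in> D t \<and> v \<in> D t"
    and meet_iff: "a \<in> {1..l} \<Longrightarrow> b \<in> {1..l} \<Longrightarrow> a \<noteq> b \<Longrightarrow> D a \<inter> D b \<noteq> {} \<longleftrightarrow> cyclic_adjacent l a b"
begin

definition clique_indices :: "'a \<Rightarrow> nat set" where
  "clique_indices x = {t \<in> {1..l}. x \<in> D t}"

lemma in_V_if_clique_indices_nonempty: "clique_indices x \<noteq> {} \<Longrightarrow> x \<in> V"
  using clique by (auto simp: clique_indices_def is_clique_def)

lemma adjacent_if_common_index: "t \<in> clique_indices x \<Longrightarrow> t \<in> clique_indices y \<Longrightarrow> x \<noteq> y \<Longrightarrow> E x y"
  using clique by (auto simp: clique_indices_def is_clique_def)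

lemma not_adjacent_if_disjoint_indices: "clique_indices x \<inter> clique_indices y = {} \<Longrightarrow> \<not> E x y"
  using covers_edges[of x y] unfolding clique_indices_def by blast

lemma clique_indices_private: "t \<in> {1..l} \<Longrightarrow> x \<in> private_part l D t \<longleftrightarrow> clique_indices x = {t}"
  unfolding clique_indices_def private_part_def set_eq_iff by blast

lemma exists_clique_indices_pair:
  assumes "l \<noteq> 3" "a \<in> {1..l}" "b \<in> {1..l}" "a \<noteq> b" "cyclic_adjacent l a b"
  shows "\<exists>x. clique_indices x = {a, b}"
proof -
  obtain x where x: "x \<in> D a" "x \<in> D b" using meet_iff assms(2-5) by blast
  have "c \<in> {a, b}" if "c \<in> {1..l}" "x \<in> D c" for c
  proof (rule ccontr)
    assume "c \<notin> {a, b}"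
    then have "cyclic_adjacent l a c" "cyclic_adjacent l b c"
      using meet_iff[of a c] meet_iff[of b c] x that assms(2,3) by blast+
    moreover have "a \<noteq> c" "b \<noteq> c" using \<open>c \<notin> {a, b}\<close> by auto
    ultimately show False
      using cyclic_adjacent_no_triangle[OF assms(1-3) that(1) assms(4)] assms(5) by blast
  qed
  then have "clique_indices x = {a, b}" using x assms(2,3) by (auto simp: clique_indices_def)
  then show ?thesis ..
qed

lemma clique_cycle_shift:
  assumes "i \<in> {1..l}"
  shows "clique_cycle V E l (D \<circ> cyclic_shift l i)"
proof
  have bij: "bij_betw (cyclic_shift l i) {1..l} {1..l}" using bij_betw_cyclic_shift[OF assms] .
  then have shift_in: "t \<in> {1..l} \<Longrightarrow> cyclic_shift l i t \<in> {1..l}" for t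
    using bij_betwE by blast
  show "graph V E" by (rule graph)
  show "is_clique V E ((D \<circ> cyclic_shift l i) t)" if "t \<in> {1..l}" for t
    using clique shift_in that by simp
  show "\<exists>t\<in>{1..l}. u \<in> (D \<circ> cyclic_shift l i) t \<and> v \<in> (D \<circ> cyclic_shift l i) t" if e: "E u v" for u v
  proof -
    obtain s where "s \<in> {1..l}" "u \<in> D s" "v \<in> D s" using covers_edges[OF e] by blast
    moreover obtain t where "t \<in> {1..l}" "s = cyclic_shift l i t"
      using bij \<open>s \<in> {1..l}\<close> by (metis bij_betw_def imageE)
    ultimately show ?thesis by auto
  qed
  show "(D \<circ> cyclic_shift l i) a \<inter> (D \<circ> cyclic_shift l i) b \<noteq> {} \<longleftrightarrow> cyclic_adjacent l a b"
    if "a \<in> {1..l}" "b \<in> {1..l}" "a \<noteq> b" for a b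
  proof -
    have "cyclic_shift l i a \<noteq> cyclic_shift l i b"
      using bij that by (metis bij_betw_def inj_on_def)
    then show ?thesis
      using meet_iff shift_in that cyclic_adjacent_shift[OF assms that(1,2)] by simp
  qed
qed

lemma exists_vertex_witness_indices:
  assumes "l \<noteq> 3" "2 \<le> r" "r \<le> l" "private_part l D 1 \<noteq> {}" "private_part l D r \<noteq> {}"
    and t: "t \<in> {1..l}"
  shows "\<exists>x. clique_indices x = witness_indices r t"
proof -
  consider "t = 1" | "t = r" | "t \<noteq> 1" "t \<noteq> r" by blast
  then show ?thesis
  proof cases
    case 1
    then show ?thesis using assms(4) t clique_indices_private[OF t] by (auto simp: witness_indices_def)
  next
    case 2
    then show ?thesis using assms(2,5) t clique_indices_private[OF t] by (auto simp: witness_indices_def)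
  next
    case 3
    then obtain a where "a \<in> {1..l}" "a \<noteq> t" "cyclic_adjacent l t a" "witness_indices r t = {t, a}"
      using witness_indices_pair[OF assms(2,3) t] by blast
    then show ?thesis using exists_clique_indices_pair[OF assms(1) t] by metis
  qed
qed

lemma exists_vertex_forcer_indices:
  assumes "l \<noteq> 3" "2 \<le> r" "r \<le> l" "k \<in> {1..l}"
  shows "\<exists>x. clique_indices x = forcer_indices l r k"
  using forcer_indices_pair[OF assms(2-4)] exists_clique_indices_pair[OF assms(1)] by metis

lemma forcing_set_two_private:
  assumes "l \<noteq> 3" "2 \<le> r" "r \<le> l" "private_part l D 1 \<noteq> {}" "private_part l D r \<noteq> {}"
  shows "\<exists>B. pzf_set V E B \<and> card B = card V - l"
proof -
  let ?rk = "forcing_rank l r"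
  obtain w where w: "\<And>t. t \<in> {1..l} \<Longrightarrow> clique_indices (w t) = witness_indices r t"
    using exists_vertex_witness_indices[OF assms] by metis
  obtain f where f: "\<And>k. k \<in> {1..l} \<Longrightarrow> clique_indices (f k) = forcer_indices l r k"
    using exists_vertex_forcer_indices[OF assms(1-3)] by metis
  have inj: "inj_on w {1..l}"
    by (rule inj_onI) (metis w witness_indices_eq_iff[OF assms(2,3)])
  have wV: "w ` {1..l} \<subseteq> V"
    using w witness_indices_self in_V_if_clique_indices_nonempty by blast
  have "pzf_reach V E (V - w ` {1..l}) V"
  proof (rule pzf_reach_ranked[OF graph _ wV inj inj_on_forcing_rank[OF assms(2,3)]])
    fix k assume k: "k \<in> {1..l}"
    have f_k: "k \<in> clique_indices (f k)" using f[OF k] forcer_indices_self[of k l r] k by simp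
    have w_k: "k \<in> clique_indices (w k)" using w[OF k] witness_indices_self by simp
    have "f k \<notin> w ` {m\<in>{1..l}. ?rk k \<le> ?rk m}"
      using f[OF k] w forcer_indices_not_witness[OF assms(2,3) k] by fastforce
    moreover have "f k \<in> V" using f_k in_V_if_clique_indices_nonempty by blast
    moreover have "E (f k) (w k)"
      using adjacent_if_common_index[OF f_k w_k] calculation(1) k by blast
    moreover have "(\<forall>m\<in>{1..l}. ?rk k < ?rk m \<longrightarrow> \<not> E (f k) (w m))
        \<or> (\<forall>m\<in>{1..l}. ?rk k < ?rk m \<longrightarrow> \<not> E (w k) (w m))"
      using forcing_later_disjoint[OF assms(2,3) k] f[OF k] w[OF k] w not_adjacent_if_disjoint_indices
      by metis
    ultimately show "\<exists>u\<in>V - w ` {m\<in>{1..l}. ?rk k \<le> ?rk m}. E u (w k) \<and>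
        ((\<forall>m\<in>{1..l}. ?rk k < ?rk m \<longrightarrow> \<not> E u (w m)) \<or> (\<forall>m\<in>{1..l}. ?rk k < ?rk m \<longrightarrow> \<not> E (w k) (w m)))"
      by blast
  qed simp
  moreover have "finite V" using graph by (simp add: graph_def)
  ultimately show ?thesis using pzf_set_complement[OF _ wV] card_image[OF inj] by auto
qed

lemma forcing_set_private_pair:
  assumes "l \<noteq> 3" "i \<in> {1..l}" "j \<in> {1..l}" "i \<noteq> j"
    and "private_part l D i \<noteq> {}" "private_part l D j \<noteq> {}"
  shows "\<exists>B. pzf_set V E B \<and> card B = card V - l"
proof -
  interpret shifted: clique_cycle V E l "D \<circ> cyclic_shift l i"
    using clique_cycle_shift[OF assms(2)] .
  have bij: "bij_betw (cyclic_shift l i) {1..l} {1..l}" using bij_betw_cyclic_shift[OF assms(2)] .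
  obtain r where r: "r \<in> {1..l}" "cyclic_shift l i r = j"
    using bij assms(3) by (metis bij_betw_def imageE)
  have "r \<noteq> 1" using r cyclic_shift_1[OF assms(2)] assms(4) by auto
  then have "2 \<le> r" "r \<le> l" using r(1) by auto
  have "private_part l (D \<circ> cyclic_shift l i) 1 = private_part l D i"
    using private_part_reindex[OF bij, of 1 D] cyclic_shift_1[OF assms(2)] assms(2) by simp
  moreover have "private_part l (D \<circ> cyclic_shift l i) r = private_part l D j"
    using private_part_reindex[OF bij r(1), of D] r(2) by simp
  ultimately show ?thesis
    using shifted.forcing_set_two_private[OF assms(1) \<open>2 \<le> r\<close> \<open>r \<le> l\<close>] assms(5,6) by simp
qed

lemma clique_not_subset:
  assumes "inj_on D {1..l}" "\<And>t. t \<in> {1..l} \<Longrightarrow> is_maximal_clique V E (D t)"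
    and "s \<in> {1..l}" "t \<in> {1..l}" "s \<noteq> t"
  shows "\<not> D s \<subseteq> D t"
  using assms(2)[OF assms(3)] clique[OF assms(4)] inj_on_contraD[OF assms(1) assms(5,3,4)]
  by (auto simp: is_maximal_clique_def)

lemma triangle_meet: "l = 3 \<Longrightarrow> a \<in> {1..l} \<Longrightarrow> b \<in> {1..l} \<Longrightarrow> a \<noteq> b \<Longrightarrow> D a \<inter> D b \<noteq> {}"
  using meet_iff by (auto simp: cyclic_adjacent_def)

text \<open>The white vertex y of the third clique D m and its forcer x: a private vertex of D m serves as
  y if there is one, otherwise x is taken outside D j; either way one of them is not adjacent to
  the private vertex pj of D j, which is forced last.\<close>
lemma triangle_third_pair:
  assumes "l = 3" "inj_on D {1..l}" "\<And>t. t \<in> {1..l} \<Longrightarrow> is_maximal_clique V E (D t)"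
    and all: "{1..l} = {i, j, m}" and "i \<noteq> j" "m \<noteq> i" "m \<noteq> j"
    and pj: "clique_indices pj = {j}"
  obtains x y where "m \<in> clique_indices x" "m \<in> clique_indices y" "i \<notin> clique_indices y" "x \<noteq> y"
    "\<not> E x pj \<or> \<not> E y pj"
proof (cases "private_part l D m = {}")
  case True
  have ijm: "i \<in> {1..l}" "j \<in> {1..l}" "m \<in> {1..l}" using all by auto
  obtain x where "x \<in> D m" "x \<notin> D j" using clique_not_subset[OF assms(2,3)] ijm assms(7) by blast
  moreover obtain y where "y \<in> D m" "y \<notin> D i" using clique_not_subset[OF assms(2,3)] ijm assms(6) by blast
  moreover have "x \<in> D i" using True \<open>x \<in> D m\<close> \<open>x \<notin> D j\<close> all by (auto simp: private_part_def)
  ultimately show ?thesis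
    using that[of x y] not_adjacent_if_disjoint_indices[of x pj] pj ijm
    by (auto simp: clique_indices_def)
next
  case False
  have ijm: "i \<in> {1..l}" "m \<in> {1..l}" using all by auto
  then obtain y where y: "clique_indices y = {m}" using False clique_indices_private by blast
  obtain x where "x \<in> D m" "x \<in> D i" using triangle_meet[OF assms(1)] ijm assms(6) by blast
  then have "m \<in> clique_indices x" "i \<in> clique_indices x" using ijm by (auto simp: clique_indices_def)
  moreover have "\<not> E y pj" using not_adjacent_if_disjoint_indices[of y pj] y pj assms(7) by auto
  moreover have "x \<noteq> y" using \<open>i \<in> clique_indices x\<close> y assms(6) by auto
  ultimately show ?thesis by (intro that[of x y]) (use y assms(6) in auto)
qed

lemma forcing_set_triangle:
  assumes "l = 3" and inj: "inj_on D {1..l}" and maximal: "\<And>t. t \<in> {1..l} \<Longrightarrow> is_maximal_clique V E (D t)"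
    and ij: "i \<in> {1..l}" "j \<in> {1..l}" "i \<noteq> j"
    and "private_part l D i \<noteq> {}" "private_part l D j \<noteq> {}"
  shows "\<exists>B. pzf_set V E B \<and> card B = card V - l"
proof -
  obtain m where m: "m \<in> {1..l}" "m \<noteq> i" "m \<noteq> j" and all: "{1..l} = {i, j, m}"
    using obtain_third_index[of i j] ij unfolding \<open>l = 3\<close> by blast
  obtain pi pj where pi: "clique_indices pi = {i}" and pj: "clique_indices pj = {j}"
    using assms(7,8) clique_indices_private ij by blast
  obtain x y where xy: "m \<in> clique_indices x" "m \<in> clique_indices y" "i \<notin> clique_indices y" "x \<noteq> y"
    and no_edge: "\<not> E x pj \<or> \<not> E y pj"
    using triangle_third_pair[OF assms(1-3) all ij(3) m(2,3) pj] by blast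
  obtain u where u: "i \<in> clique_indices u" "j \<in> clique_indices u"
    using triangle_meet[OF \<open>l = 3\<close> ij] ij by (auto simp: clique_indices_def)
  define w where "w t = (if t = i then pi else if t = m then y else pj)" for t
  define rk :: "nat \<Rightarrow> nat" where "rk t = (if t = i then 0 else if t = m then 1 else 2)" for t
  have idx: "clique_indices (w i) = {i}" "m \<in> clique_indices (w m)" "i \<notin> clique_indices (w m)"
      "clique_indices (w j) = {j}"
    using pi pj xy m ij by (auto simp: w_def)
  have wV: "w ` {1..l} \<subseteq> V"
    using idx all in_V_if_clique_indices_nonempty by fastforce
  have inj_w: "inj_on w {1..l}"
    using idx all ij m unfolding inj_on_def by (metis empty_iff insert_iff)
  have inj_rk: "inj_on rk {1..l}" using all ij m by (auto simp: inj_on_def rk_def)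
  have u_black: "u \<notin> w ` {1..l}" "u \<in> V"
    using u idx all ij in_V_if_clique_indices_nonempty[of u] by auto
  have "pzf_reach V E (V - w ` {1..l}) V"
  proof (rule pzf_reach_ranked[OF graph _ wV inj_w inj_rk])
    fix k assume "k \<in> {1..l}"
    then consider "k = i" | "k = m" | "k = j" using all by blast
    then show "\<exists>v\<in>V - w ` {n\<in>{1..l}. rk k \<le> rk n}. E v (w k) \<and>
        ((\<forall>n\<in>{1..l}. rk k < rk n \<longrightarrow> \<not> E v (w n)) \<or> (\<forall>n\<in>{1..l}. rk k < rk n \<longrightarrow> \<not> E (w k) (w n)))"
    proof cases
      case 1
      have "u \<noteq> w i" using u_black(1) ij(1) by blast
      then have "E u (w i)" using adjacent_if_common_index[of i u "w i"] u idx by simp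
      moreover have "\<not> E (w i) (w n)" if "n \<in> {1..l}" "n \<noteq> i" for n
        using not_adjacent_if_disjoint_indices idx that all by auto
      ultimately show ?thesis using 1 u_black by (intro bexI[of _ u]) (auto simp: rk_def)
    next
      case 2
      have "x \<notin> w ` {n\<in>{1..l}. rk m \<le> rk n}"
        using xy idx pj m ij by (auto simp: rk_def w_def)
      moreover have "E x (w m)" using adjacent_if_common_index[of m x y] xy by (simp add: w_def m)
      moreover have "x \<in> V" using xy in_V_if_clique_indices_nonempty by blast
      ultimately show ?thesis using 2 no_edge m ij by (auto simp: rk_def w_def)
    next
      case 3
      have "u \<noteq> w j" using u_black(1) ij(2) by blast
      then have "E u (w j)" using adjacent_if_common_index[of j u "w j"] u idx by simp
      then show ?thesis using 3 u_black ij m by (intro bexI[of _ u]) (auto simp: rk_def)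
    qed
  qed simp
  moreover have "finite V" using graph by (simp add: graph_def)
  moreover have "card (w ` {1..l}) = l" using card_image[OF inj_w] by simp
  ultimately show ?thesis using pzf_set_complement[OF _ wV] by auto
qed

end

lemma cycle_of_cliques_imp_clique_cycle:
  assumes "graph V E" "cycle_of_cliques V E l C"
  shows "clique_cycle V E l C"
proof
  have cover: "clique_covering V E (C ` {1..l})"
    and maximal: "\<forall>K\<in>C ` {1..l}. is_maximal_clique V E K"
    using assms(2) unfolding cycle_of_cliques_def min_max_clique_covering_def by blast+
  show "graph V E" by fact
  show "is_clique V E (C t)" if "t \<in> {1..l}" for t
    using maximal that by (auto simp: is_maximal_clique_def)
  show "\<exists>t\<in>{1..l}. u \<in> C t \<and> v \<in> C t" if "E u v" for u v
    using cover that unfolding clique_covering_def by blast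
  show "C a \<inter> C b \<noteq> {} \<longleftrightarrow> cyclic_adjacent l a b" if "a \<in> {1..l}" "b \<in> {1..l}" "a \<noteq> b" for a b
    using assms(2) that unfolding cycle_of_cliques_def cyclic_adjacent_def by blast
qed

theorem mainTheorem9:
  fixes V :: "'a set" and E :: "'a \<Rightarrow> 'a \<Rightarrow> bool" and l :: nat and C :: "nat \<Rightarrow> 'a set"
  assumes "graph V E"
    and "cycle_of_cliques V E l C"
    and "i \<in> {1..l}" and "j \<in> {1..l}" and "i \<noteq> j"
    and "private_part l C i \<noteq> {}" and "private_part l C j \<noteq> {}"
  shows "Z_plus V E = card V - cc V E"
proof -
  interpret clique_cycle V E l C
    using cycle_of_cliques_imp_clique_cycle[OF assms(1,2)] .
  have inj: "inj_on C {1..l}" and cover: "clique_covering V E (C ` {1..l})"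
    and card_cover: "card (C ` {1..l}) = cc V E" and maximal: "\<forall>K\<in>C ` {1..l}. is_maximal_clique V E K"
    using assms(2) unfolding cycle_of_cliques_def min_max_clique_covering_def by blast+
  have cc: "cc V E = l" using card_cover card_image[OF inj] by simp
  obtain B where B: "pzf_set V E B" "card B = card V - l"
  proof (cases "l = 3")
    case True
    then show ?thesis using forcing_set_triangle[OF True inj _ assms(3-7)] maximal that by blast
  next
    case False
    then show ?thesis using forcing_set_private_pair[OF False assms(3-7)] that by blast
  qed
  moreover have "card V - l \<le> card B'" if "pzf_set V E B'" for B'
    using card_le_clique_covering_plus_pzf_set[OF assms(1) cover that] card_cover cc by linarith
  ultimately have "Z_plus V E = card V - l"
    unfolding Z_plus_def by (intro Least_equality) auto
  then show ?thesis using cc by simp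
qed

end
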